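(* Let $b,c>0$, let $x_1,x_2,\dots\in\mathbb{R}^d$ and $y_1,y_2,\dots\in\mathbb{R}$. For $t\ge1$ define \[ Q_t(u_1,\dots,u_t)=b\|u_1\|^2+c\sum_{s=1}^{t-1}\|u_{s+1}-u_s\|^2+\sum_{s=1}^t (y_s-u_s^\top x_s)^2 \] and $P_t(u_t)=\min_{u_1,\dots,u_{t-1}}Q_t(u_1,\dots,u_t)$ (with $P_1=Q_1$). Define $D_1=bI+x_1x_1^\top$, $e_1=y_1x_1$, $f_1=y_1^2$, and for $t\ge2$ \[ D_t=\big(D_{t-1}^{-1}+c^{-1}I\big)^{-1}+x_tx_t^\top,\quad e_t=\big(I+c^{-1}D_{t-1}\big)^{-1}e_{t-1}+y_tx_t,\quad f_t=f_{t-1}-e_{t-1}^\top\big(cI+D_{t-1}\big)^{-1}e_{t-1}+y_t^2 . \] Then for every $t\ge1$ the matrix $D_t\in\mathbb{R}^{d\times d}$ is positive definite and, for all $u_t\in\mathbb{R}^d$, \[ P_t(u_t)=u_t^\top D_tu_t-2u_t^\top e_t+f_t . \] *)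

theory Defs
  imports "HOL-Analysis.Analysis"
begin

definition outerp :: "real^'d \<Rightarrow> real^'d \<Rightarrow> real^'d^'d" where
  "outerp x z = (\<chi> i j. x $ i * z $ j)"

definition pos_def :: "real^'d^'d \<Rightarrow> bool" where
  "pos_def A \<longleftrightarrow> transpose A = A \<and> (\<forall>v. v \<noteq> 0 \<longrightarrow> v \<bullet> (A *v v) > 0)"

definition Qf :: "real \<Rightarrow> real \<Rightarrow> (nat \<Rightarrow> real^'d) \<Rightarrow> (nat \<Rightarrow> real) \<Rightarrow> nat
    \<Rightarrow> (nat \<Rightarrow> real^'d) \<Rightarrow> real" where
  "Qf b c x y t u = b * (norm (u 1))^2 + c * (\<Sum>s=1..t-1. (norm (u (s+1) - u s))^2)
      + (\<Sum>s=1..t. (y s - u s \<bullet> x s)^2)"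

text \<open>P_t(v) = min over u_1..u_{t-1} of Q_t(u_1,...,u_{t-1},v) (infimum; attainment stated separately).\<close>
definition Pf :: "real \<Rightarrow> real \<Rightarrow> (nat \<Rightarrow> real^'d) \<Rightarrow> (nat \<Rightarrow> real) \<Rightarrow> nat
    \<Rightarrow> real^'d \<Rightarrow> real" where
  "Pf b c x y t v = Inf {Qf b c x y t u | u. u t = v}"

text \<open>The recursion for (D_t, e_t, f_t), t \<ge> 1 (index 0 is a dummy).\<close>
fun DEF :: "real \<Rightarrow> real \<Rightarrow> (nat \<Rightarrow> real^'d) \<Rightarrow> (nat \<Rightarrow> real) \<Rightarrow> nat
    \<Rightarrow> (real^'d^'d) \<times> (real^'d) \<times> real" where
  "DEF b c x y 0 = (mat 0, 0, 0)"
| "DEF b c x y (Suc 0) = (b *\<^sub>R mat 1 + outerp (x 1) (x 1), y 1 *\<^sub>R x 1, (y 1)^2)"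
| "DEF b c x y (Suc (Suc n)) =
     (let (D, e, f) = DEF b c x y (Suc n); t = Suc (Suc n) in
      (matrix_inv (matrix_inv D + (1/c) *\<^sub>R mat 1) + outerp (x t) (x t),
       matrix_inv (mat 1 + (1/c) *\<^sub>R D) *v e + y t *\<^sub>R x t,
       f - e \<bullet> (matrix_inv (c *\<^sub>R mat 1 + D) *v e) + (y t)^2))"

definition Dm where "Dm b c x y t = fst (DEF b c x y t)"
definition ev where "ev b c x y t = fst (snd (DEF b c x y t))"
definition fv where "fv b c x y t = snd (snd (DEF b c x y t))"

end

theory Submission
  imports Defs
begin

text \<open>
  Since \<open>Q\<^sub>t\<^sub>+\<^sub>1\<close> is \<open>Q\<^sub>t\<close> plus \<open>c \<parallel>u\<^sub>t\<^sub>+\<^sub>1 - u\<^sub>t\<parallel>\<^sup>2 + (y\<^sub>t\<^sub>+\<^sub>1 - u\<^sub>t\<^sub>+\<^sub>1 \<bullet> x\<^sub>t\<^sub>+\<^sub>1)\<^sup>2\<close>,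
  minimising over \<open>u\<^sub>1, \<dots>, u\<^sub>t\<^sub>-\<^sub>1\<close> first gives
  \<open>P\<^sub>t\<^sub>+\<^sub>1(v) = min\<^sub>w (P\<^sub>t(w) + c \<parallel>v - w\<parallel>\<^sup>2) + (y\<^sub>t\<^sub>+\<^sub>1 - v \<bullet> x\<^sub>t\<^sub>+\<^sub>1)\<^sup>2\<close>.
  For quadratic \<open>P\<^sub>t\<close> the bracket is a quadratic in \<open>w\<close> with Hessian \<open>cI + D\<^sub>t\<close>, which is positive
  definite; completing the square, the minimum is attained at \<open>w = (cI + D\<^sub>t)\<^sup>-\<^sup>1 (e\<^sub>t + c v)\<close> and is
  again quadratic in \<open>v\<close>. Its coefficients are those of the recursion by the resolvent identities
  \<open>(D\<^sup>-\<^sup>1 + c\<^sup>-\<^sup>1 I)\<^sup>-\<^sup>1 = cI - c\<^sup>2 (cI + D)\<^sup>-\<^sup>1\<close> and \<open>(I + c\<^sup>-\<^sup>1 D)\<^sup>-\<^sup>1 = c (cI + D)\<^sup>-\<^sup>1\<close>.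
\<close>

lemma transpose_add: "transpose (A + B) = transpose A + transpose (B :: 'a::plus^'n^'m)"
  by (simp add: transpose_def vec_eq_iff)

lemma symmetric_matrix_inner:
  fixes A :: "real^'n^'n"
  assumes "transpose A = A"
  shows "(A *v x) \<bullet> y = x \<bullet> (A *v y)"
  by (metis assms dot_lmul_matrix inner_commute transpose_matrix_vector)

lemma matrix_inv_unique:
  fixes A B :: "'a::field^'n^'n"
  assumes "A ** B = mat 1"
  shows "matrix_inv A = B"
proof -
  have BA: "B ** A = mat 1"
    using assms matrix_left_right_inverse by blast
  have "A ** matrix_inv A = mat 1 \<and> matrix_inv A ** A = mat 1"
    unfolding matrix_inv_def by (rule someI[of _ B]) (use assms BA in blast)
  then have "matrix_inv A ** A = mat 1" ..
  have "matrix_inv A = (matrix_inv A ** A) ** B"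
    by (simp flip: matrix_mul_assoc add: assms)
  then show ?thesis
    using \<open>matrix_inv A ** A = mat 1\<close> by simp
qed

definition psd :: "real^'n^'n \<Rightarrow> bool" where
  "psd A \<longleftrightarrow> transpose A = A \<and> (\<forall>v. v \<bullet> (A *v v) \<ge> 0)"

lemma pos_def_imp_psd: "pos_def A \<Longrightarrow> psd A"
  unfolding pos_def_def psd_def by (metis inner_zero_left order_less_imp_le order_refl)

lemma pos_def_add_psd:
  assumes "pos_def A" "psd B"
  shows "pos_def (A + B)"
  using assms unfolding pos_def_def psd_def
  by (simp add: transpose_add matrix_vector_mult_add_rdistrib inner_add_right add_pos_nonneg)

lemma scaleR_mat1_mult_vector: "(s *\<^sub>R mat 1) *v (v :: real^'n) = s *\<^sub>R v"
  by (metis matrix_vector_mul_lid scaleR_matrix_vector_assoc)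

lemma pos_def_scaleR_mat1: "s > 0 \<Longrightarrow> pos_def (s *\<^sub>R (mat 1 :: real^'n^'n))"
  unfolding pos_def_def by (simp add: scaleR_mat1_mult_vector transpose_scalar)

lemma outerp_mult_vector: "outerp x x *v v = (x \<bullet> v) *\<^sub>R (x :: real^'n)"
  by (simp add: outerp_def matrix_vector_mult_def vec_eq_iff inner_vec_def sum_distrib_left mult_ac)

lemma psd_outerp: "psd (outerp x (x :: real^'n))"
  unfolding psd_def
  by (simp add: outerp_mult_vector inner_commute)
    (simp add: transpose_def outerp_def vec_eq_iff mult.commute)

lemma pos_def_inj:
  assumes "pos_def A"
  shows "inj ((*v) A)"
proof (rule injI)
  fix u w
  assume "A *v u = A *v w"
  then have "A *v (u - w) = 0"
    by (simp add: matrix_vector_mult_diff_distrib)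
  then show "u = w"
    using assms unfolding pos_def_def by (metis inner_zero_right less_irrefl right_minus_eq)
qed

lemma pos_def_matrix_inv_mult:
  assumes "pos_def A"
  shows "A ** matrix_inv A = mat 1" "matrix_inv A ** A = mat 1"
proof -
  obtain B where "B ** A = mat 1"
    using pos_def_inj[OF assms] matrix_left_invertible_injective by blast
  then have "A ** B = mat 1"
    using matrix_left_right_inverse by blast
  moreover have "matrix_inv A = B"
    using \<open>A ** B = mat 1\<close> by (rule matrix_inv_unique)
  ultimately show "A ** matrix_inv A = mat 1" "matrix_inv A ** A = mat 1"
    using \<open>B ** A = mat 1\<close> by simp_all
qed

lemma pos_def_matrix_inv_mult_vector:
  assumes "pos_def A"
  shows "A *v (matrix_inv A *v v) = v" "matrix_inv A *v (A *v v) = v"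
  using pos_def_matrix_inv_mult[OF assms] by (simp_all add: matrix_vector_mul_assoc)

lemma pos_def_matrix_inv:
  assumes "pos_def A"
  shows "pos_def (matrix_inv A)"
proof -
  have sym: "transpose A = A"
    using assms pos_def_def by blast
  have "A ** transpose (matrix_inv A) = mat 1"
    using pos_def_matrix_inv_mult(2)[OF assms]
    by (metis matrix_transpose_mul sym transpose_mat)
  then have "transpose (matrix_inv A) = matrix_inv A"
    by (metis matrix_inv_unique)
  moreover have "v \<bullet> (matrix_inv A *v v) > 0" if "v \<noteq> 0" for v
  proof -
    define w where "w = matrix_inv A *v v"
    have Aw: "A *v w = v"
      unfolding w_def by (rule pos_def_matrix_inv_mult_vector(1)[OF assms])
    with that have "w \<noteq> 0" by auto
    then have "w \<bullet> (A *v w) > 0"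
      using assms pos_def_def by blast
    then show ?thesis
      using Aw by (simp add: w_def inner_commute)
  qed
  ultimately show ?thesis
    unfolding pos_def_def by blast
qed

lemma pos_def_scaleR_mat1_add:
  assumes "pos_def D" "c > 0"
  shows "pos_def (c *\<^sub>R mat 1 + D)"
  using assms by (simp add: pos_def_add_psd pos_def_imp_psd pos_def_scaleR_mat1)

lemma matrix_inv_scaleR_mat1_add_mult_vector:
  assumes "pos_def D" "c > 0"
  shows "c *\<^sub>R (matrix_inv (c *\<^sub>R mat 1 + D) *v z) + D *v (matrix_inv (c *\<^sub>R mat 1 + D) *v z) = z"
  using pos_def_matrix_inv_mult_vector(1)[OF pos_def_scaleR_mat1_add[OF assms], of z]
  by (simp add: matrix_vector_mult_add_rdistrib scaleR_mat1_mult_vector)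

lemma matrix_inv_mat1_add_scaleR:
  fixes D :: "real^'n^'n"
  assumes D: "pos_def D" and c: "c > 0"
  shows "matrix_inv (mat 1 + (1/c) *\<^sub>R D) = c *\<^sub>R matrix_inv (c *\<^sub>R mat 1 + D)"
proof (rule matrix_inv_unique, subst matrix_eq, intro allI)
  fix z :: "real^'n"
  define w where "w = matrix_inv (c *\<^sub>R mat 1 + D) *v z"
  have "(mat 1 + (1/c) *\<^sub>R D) *v (c *\<^sub>R w) = c *\<^sub>R w + D *v w"
    using c by (simp add: matrix_vector_mult_add_rdistrib matrix_scaleR_vector_ac
        scaleR_matrix_vector_assoc[symmetric] scaleR_add_right)
  also have "\<dots> = z"
    unfolding w_def by (rule matrix_inv_scaleR_mat1_add_mult_vector[OF D c])
  finally show "((mat 1 + (1/c) *\<^sub>R D) ** (c *\<^sub>R matrix_inv (c *\<^sub>R mat 1 + D))) *v z = mat 1 *v z"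
    by (simp add: w_def matrix_vector_mul_assoc[symmetric] scaleR_matrix_vector_assoc[symmetric])
qed

lemma matrix_inv_matrix_inv_add_scaleR_mat1:
  fixes D :: "real^'n^'n"
  assumes D: "pos_def D" and c: "c > 0"
  shows "matrix_inv (matrix_inv D + (1/c) *\<^sub>R mat 1)
    = c *\<^sub>R mat 1 - c\<^sup>2 *\<^sub>R matrix_inv (c *\<^sub>R mat 1 + D)"
proof (rule matrix_inv_unique, subst matrix_eq, intro allI)
  fix z :: "real^'n"
  define w where "w = matrix_inv (c *\<^sub>R mat 1 + D) *v z"
  have Aw: "c *\<^sub>R w + D *v w = z"
    unfolding w_def by (rule matrix_inv_scaleR_mat1_add_mult_vector[OF D c])
  have "(c *\<^sub>R mat 1 - c\<^sup>2 *\<^sub>R matrix_inv (c *\<^sub>R mat 1 + D)) *v z = c *\<^sub>R z - c\<^sup>2 *\<^sub>R w"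
    by (simp add: matrix_vector_mult_diff_rdistrib scaleR_mat1_mult_vector w_def
        scaleR_matrix_vector_assoc[symmetric])
  also have "\<dots> = c *\<^sub>R (D *v w)"
    by (simp add: Aw[symmetric] algebra_simps power2_eq_square)
  finally have "(matrix_inv D + (1/c) *\<^sub>R mat 1) *v
      ((c *\<^sub>R mat 1 - c\<^sup>2 *\<^sub>R matrix_inv (c *\<^sub>R mat 1 + D)) *v z) = c *\<^sub>R w + D *v w"
    using c by (simp add: matrix_vector_mult_add_rdistrib scaleR_mat1_mult_vector
        matrix_scaleR_vector_ac scaleR_matrix_vector_assoc[symmetric]
        pos_def_matrix_inv_mult_vector(2)[OF D] scaleR_add_right)
  then show "((matrix_inv D + (1/c) *\<^sub>R mat 1) ** (c *\<^sub>R mat 1 - c\<^sup>2 *\<^sub>R matrix_inv (c *\<^sub>R mat 1 + D))) *v z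
      = mat 1 *v z"
    by (simp add: matrix_vector_mul_assoc[symmetric] Aw)
qed

definition quadratic_fun :: "real^'n^'n \<Rightarrow> real^'n \<Rightarrow> real \<Rightarrow> real^'n \<Rightarrow> real" where
  "quadratic_fun D e f v = v \<bullet> (D *v v) - 2 * (v \<bullet> e) + f"

lemma quadratic_fun_complete_square:
  assumes "transpose A = A" "A *v z = g"
  shows "quadratic_fun A g h w = (w - z) \<bullet> (A *v (w - z)) + h - z \<bullet> g"
proof -
  have "z \<bullet> (A *v w) = w \<bullet> g"
    using symmetric_matrix_inner[OF assms(1), of z w] assms(2) by (simp add: inner_commute)
  then show ?thesis
    unfolding quadratic_fun_def using assms(2)
    by (simp add: matrix_vector_mult_diff_distrib inner_diff_left inner_diff_right inner_commute)
qed

lemma quadratic_fun_add_sq_dist: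
  "quadratic_fun D e f w + c * (norm (v - w))\<^sup>2
    = quadratic_fun (c *\<^sub>R mat 1 + D) (e + c *\<^sub>R v) (f + c * (v \<bullet> v)) w"
  unfolding quadratic_fun_def
  by (simp add: power2_norm_eq_inner matrix_vector_mult_add_rdistrib scaleR_mat1_mult_vector
      inner_diff_left inner_diff_right inner_add_right inner_commute algebra_simps)

lemma quadratic_fun_add_sq_residual:
  "quadratic_fun D e f v + (y - v \<bullet> x)\<^sup>2
    = quadratic_fun (D + outerp x x) (e + y *\<^sub>R x) (f + y\<^sup>2) v"
  unfolding quadratic_fun_def
  by (simp add: matrix_vector_mult_add_rdistrib outerp_mult_vector inner_add_right
      inner_commute[of x v] algebra_simps power2_eq_square)

lemma quadratic_fun_add_sq_dist_split:
  fixes D :: "real^'n^'n" and e v w :: "real^'n"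
  assumes D: "pos_def D" and c: "c > 0"
  defines "A \<equiv> c *\<^sub>R mat 1 + D"
  defines "z \<equiv> matrix_inv A *v (e + c *\<^sub>R v)"
  shows "quadratic_fun D e f w + c * (norm (v - w))\<^sup>2
    = (w - z) \<bullet> (A *v (w - z))
      + quadratic_fun (matrix_inv (matrix_inv D + (1/c) *\<^sub>R mat 1))
          (matrix_inv (mat 1 + (1/c) *\<^sub>R D) *v e) (f - e \<bullet> (matrix_inv A *v e)) v"
proof -
  have A: "pos_def A"
    unfolding A_def using D c by (rule pos_def_scaleR_mat1_add)
  have Ai: "transpose (matrix_inv A) = matrix_inv A"
    using pos_def_matrix_inv[OF A] pos_def_def by blast
  have "A *v z = e + c *\<^sub>R v"
    unfolding z_def by (rule pos_def_matrix_inv_mult_vector(1)[OF A])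
  then have "quadratic_fun D e f w + c * (norm (v - w))\<^sup>2
      = (w - z) \<bullet> (A *v (w - z)) + (f + c * (v \<bullet> v)) - z \<bullet> (e + c *\<^sub>R v)"
    unfolding quadratic_fun_add_sq_dist A_def[symmetric]
    by (rule quadratic_fun_complete_square[rotated]) (use A pos_def_def in blast)
  moreover have "z \<bullet> (e + c *\<^sub>R v)
      = e \<bullet> (matrix_inv A *v e) + 2 * c * (v \<bullet> (matrix_inv A *v e)) + c\<^sup>2 * (v \<bullet> (matrix_inv A *v v))"
    using symmetric_matrix_inner[OF Ai, of e v]
    by (simp add: z_def matrix_vector_right_distrib matrix_vector_mult_scaleR inner_add_left
        inner_add_right inner_commute algebra_simps power2_eq_square)
  moreover have "v \<bullet> (matrix_inv (matrix_inv D + (1/c) *\<^sub>R mat 1) *v v)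
      = c * (v \<bullet> v) - c\<^sup>2 * (v \<bullet> (matrix_inv A *v v))"
    unfolding matrix_inv_matrix_inv_add_scaleR_mat1[OF D c] A_def
    by (simp add: matrix_vector_mult_diff_rdistrib scaleR_mat1_mult_vector inner_diff_right
        scaleR_matrix_vector_assoc[symmetric])
  moreover have "matrix_inv (mat 1 + (1/c) *\<^sub>R D) *v e = c *\<^sub>R (matrix_inv A *v e)"
    unfolding matrix_inv_mat1_add_scaleR[OF D c] A_def
    by (simp add: scaleR_matrix_vector_assoc[symmetric])
  ultimately show ?thesis
    unfolding quadratic_fun_def by (simp add: algebra_simps)
qed

definition marginal_min :: "((nat \<Rightarrow> 'a) \<Rightarrow> real) \<Rightarrow> nat \<Rightarrow> ('a \<Rightarrow> real) \<Rightarrow> bool" where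
  "marginal_min Q t g \<longleftrightarrow> (\<forall>v. (\<forall>u. u t = v \<longrightarrow> g v \<le> Q u) \<and> (\<exists>u. u t = v \<and> Q u = g v))"

lemma Pf_eq_marginal_min:
  assumes "marginal_min (Qf b c x y t) t g"
  shows "Pf b c x y t v = g v"
  unfolding Pf_def
proof (rule cInf_eq_minimum)
  show "g v \<in> {Qf b c x y t u |u. u t = v}"
    using assms unfolding marginal_min_def by (metis (mono_tags, lifting) mem_Collect_eq)
qed (use assms in \<open>auto simp: marginal_min_def\<close>)

lemma Qf_one: "Qf b c x y 1 u = quadratic_fun (Dm b c x y 1) (ev b c x y 1) (fv b c x y 1) (u 1)"
proof -
  have "Qf b c x y 1 u = quadratic_fun (b *\<^sub>R mat 1) 0 0 (u 1) + (y 1 - u 1 \<bullet> x 1)\<^sup>2"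
    by (simp add: Qf_def quadratic_fun_def scaleR_mat1_mult_vector power2_norm_eq_inner)
  then show ?thesis
    by (simp add: quadratic_fun_add_sq_residual Dm_def ev_def fv_def)
qed

lemma Qf_Suc:
  assumes "t \<ge> 1"
  shows "Qf b c x y (Suc t) u
    = Qf b c x y t u + c * (norm (u (Suc t) - u t))\<^sup>2 + (y (Suc t) - u (Suc t) \<bullet> x (Suc t))\<^sup>2"
  using assms unfolding Qf_def by (cases t) (simp_all add: sum.cl_ivl_Suc algebra_simps)

lemma Qf_cong:
  assumes "\<And>s. 1 \<le> s \<Longrightarrow> s \<le> t \<Longrightarrow> u s = u' s" "t \<ge> 1"
  shows "Qf b c x y t u = Qf b c x y t u'"
  using assms unfolding Qf_def by (auto intro!: sum.cong arg_cong2[where f = "(+)"])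

lemma Dm_ev_fv_Suc:
  assumes "t \<ge> 1"
  shows "Dm b c x y (Suc t)
      = matrix_inv (matrix_inv (Dm b c x y t) + (1/c) *\<^sub>R mat 1) + outerp (x (Suc t)) (x (Suc t))"
    "ev b c x y (Suc t)
      = matrix_inv (mat 1 + (1/c) *\<^sub>R Dm b c x y t) *v ev b c x y t + y (Suc t) *\<^sub>R x (Suc t)"
    "fv b c x y (Suc t)
      = fv b c x y t - ev b c x y t \<bullet> (matrix_inv (c *\<^sub>R mat 1 + Dm b c x y t) *v ev b c x y t)
        + (y (Suc t))\<^sup>2"
  using assms by (cases t; simp add: Dm_def ev_def fv_def split: prod.split)+

lemma marginal_min_Qf_Suc:
  fixes D :: "real^'d^'d"
  assumes D: "pos_def D" and c: "c > 0" and t: "t \<ge> 1"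
    and min: "marginal_min (Qf b c x y t) t (quadratic_fun D e f)"
  shows "marginal_min (Qf b c x y (Suc t)) (Suc t)
    (quadratic_fun (matrix_inv (matrix_inv D + (1/c) *\<^sub>R mat 1) + outerp (x (Suc t)) (x (Suc t)))
      (matrix_inv (mat 1 + (1/c) *\<^sub>R D) *v e + y (Suc t) *\<^sub>R x (Suc t))
      (f - e \<bullet> (matrix_inv (c *\<^sub>R mat 1 + D) *v e) + (y (Suc t))\<^sup>2))"
    (is "marginal_min _ _ ?g")
proof -
  define A where "A = c *\<^sub>R mat 1 + D"
  define z where "z v = matrix_inv A *v (e + c *\<^sub>R v)" for v
  have A: "psd A"
    unfolding A_def using D c by (intro pos_def_imp_psd pos_def_scaleR_mat1_add)
  have split: "quadratic_fun D e f w + c * (norm (v - w))\<^sup>2 + (y (Suc t) - v \<bullet> x (Suc t))\<^sup>2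
      = (w - z v) \<bullet> (A *v (w - z v)) + ?g v" for v w
    using quadratic_fun_add_sq_dist_split[OF D c, where e = e and v = v and w = w and f = f]
    by (simp add: A_def z_def quadratic_fun_add_sq_residual[symmetric])
  show ?thesis
    unfolding marginal_min_def
  proof (intro allI conjI impI)
    fix v :: "real^'d" and u
    assume "u (Suc t) = v"
    have "?g v \<le> (u t - z v) \<bullet> (A *v (u t - z v)) + ?g v"
      using A by (simp add: psd_def)
    also have "\<dots> = quadratic_fun D e f (u t) + c * (norm (v - u t))\<^sup>2 + (y (Suc t) - v \<bullet> x (Suc t))\<^sup>2"
      by (rule split[symmetric])
    also have "\<dots> \<le> Qf b c x y (Suc t) u"
      using min \<open>u (Suc t) = v\<close> by (simp add: Qf_Suc[OF t] marginal_min_def)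
    finally show "?g v \<le> Qf b c x y (Suc t) u" .
  next
    fix v :: "real^'d"
    obtain u0 where u0: "u0 t = z v" "Qf b c x y t u0 = quadratic_fun D e f (z v)"
      using min unfolding marginal_min_def by blast
    define u where "u = u0(Suc t := v)"
    have "Qf b c x y t u = Qf b c x y t u0"
      by (rule Qf_cong) (use t in \<open>auto simp: u_def\<close>)
    then have "Qf b c x y (Suc t) u
        = quadratic_fun D e f (z v) + c * (norm (v - z v))\<^sup>2 + (y (Suc t) - v \<bullet> x (Suc t))\<^sup>2"
      using u0 by (simp add: Qf_Suc[OF t] u_def)
    also have "\<dots> = ?g v"
      by (simp add: split)
    finally have "Qf b c x y (Suc t) u = ?g v" .
    moreover have "u (Suc t) = v"
      by (simp add: u_def)
    ultimately show "\<exists>u. u (Suc t) = v \<and> Qf b c x y (Suc t) u = ?g v"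
      by blast
  qed
qed

lemma pos_def_Dm_marginal_min_Qf:
  assumes b: "b > 0" and c: "c > 0" and "t \<ge> 1"
  shows "pos_def (Dm b c x y t)
    \<and> marginal_min (Qf b c x y t) t (quadratic_fun (Dm b c x y t) (ev b c x y t) (fv b c x y t))"
  using \<open>t \<ge> 1\<close>
proof (induction t rule: nat_induct_at_least)
  case base
  have "pos_def (Dm b c x y 1)"
    using b by (simp add: Dm_def pos_def_add_psd pos_def_scaleR_mat1 psd_outerp)
  moreover have "marginal_min (Qf b c x y 1) 1
      (quadratic_fun (Dm b c x y 1) (ev b c x y 1) (fv b c x y 1))"
    unfolding marginal_min_def Qf_one by (auto intro: exI[of _ "\<lambda>_. _"])
  ultimately show ?case ..
next
  case (Suc t)
  then have D: "pos_def (Dm b c x y t)"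
    by blast
  have "pos_def (Dm b c x y (Suc t))"
    unfolding Dm_ev_fv_Suc[OF \<open>t \<ge> 1\<close>] using c
    by (intro pos_def_add_psd pos_def_matrix_inv pos_def_imp_psd psd_outerp pos_def_scaleR_mat1 D) simp
  moreover have "marginal_min (Qf b c x y (Suc t)) (Suc t)
      (quadratic_fun (Dm b c x y (Suc t)) (ev b c x y (Suc t)) (fv b c x y (Suc t)))"
    unfolding Dm_ev_fv_Suc[OF \<open>t \<ge> 1\<close>] using D c \<open>t \<ge> 1\<close> Suc.IH
    by (intro marginal_min_Qf_Suc) blast+
  ultimately show ?case ..
qed

theorem lemma2:
  fixes b c :: real and x :: "nat \<Rightarrow> real^'d" and y :: "nat \<Rightarrow> real" and t :: nat
  assumes "b > 0" and "c > 0" and "t \<ge> 1"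
  shows "pos_def (Dm b c x y t) \<and>
    (\<forall>v::real^'d.
       Pf b c x y t v = v \<bullet> (Dm b c x y t *v v) - 2 * (v \<bullet> ev b c x y t) + fv b c x y t
     \<and> (\<exists>u. u t = v \<and> Qf b c x y t u = Pf b c x y t v))"
proof -
  note main = pos_def_Dm_marginal_min_Qf[OF assms]
  then have "Pf b c x y t v = quadratic_fun (Dm b c x y t) (ev b c x y t) (fv b c x y t) v" for v
    by (blast intro: Pf_eq_marginal_min)
  with main show ?thesis
    unfolding marginal_min_def quadratic_fun_def by metis
qed

end
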